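(* Let $R$ be a local integral domain and $\mathcal O$ a valuation ring of $\mathrm{Frac}(R)$. Then the additive index $[R:\mathcal O\cap R]$ is finite if and only if $R\subseteq\mathcal O$.
   Context: Rings are commutative with identity. A valuation ring of a field $K$ is a subring $\mathcal O$ with $x\in\mathcal O$ or $x^{-1}\in\mathcal O$ for every nonzero $x\in K$. *)

theory Defs
  imports Main
begin

text \<open>We work inside an ambient field, the type 'a (= K). Subrings of K are integral domains,
and every integral domain arises this way inside its fraction field.\<close>

definition subring_of :: "'a::field set \<Rightarrow> bool" where
  "subring_of R \<longleftrightarrow> 0 \<in> R \<and> 1 \<in> R \<and> (\<forall>x\<in>R. - x \<in> R)
     \<and> (\<forall>x\<in>R. \<forall>y\<in>R. x + y \<in> R \<and> x * y \<in> R)"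

definition is_frac_field_of :: "'a::field set \<Rightarrow> bool" where
  "is_frac_field_of R \<longleftrightarrow> (\<forall>x::'a. \<exists>a\<in>R. \<exists>b\<in>R. b \<noteq> 0 \<and> x = a / b)"

definition ideal_in :: "'a::field set \<Rightarrow> 'a set \<Rightarrow> bool" where
  "ideal_in R I \<longleftrightarrow> I \<subseteq> R \<and> 0 \<in> I \<and> (\<forall>x\<in>I. \<forall>y\<in>I. x + y \<in> I)
     \<and> (\<forall>r\<in>R. \<forall>x\<in>I. r * x \<in> I)"

definition maximal_ideal_in :: "'a::field set \<Rightarrow> 'a set \<Rightarrow> bool" where
  "maximal_ideal_in R M \<longleftrightarrow> ideal_in R M \<and> M \<noteq> R
     \<and> (\<forall>J. ideal_in R J \<and> M \<subseteq> J \<longrightarrow> J = M \<or> J = R)"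

definition local_ring :: "'a::field set \<Rightarrow> bool" where
  "local_ring R \<longleftrightarrow> (\<exists>!M. maximal_ideal_in R M)"

definition valuation_ring :: "'a::field set \<Rightarrow> bool" where
  "valuation_ring V \<longleftrightarrow> subring_of V \<and> (\<forall>x::'a. x \<noteq> 0 \<longrightarrow> x \<in> V \<or> inverse x \<in> V)"

definition add_cosets :: "'a::field set \<Rightarrow> 'a set \<Rightarrow> 'a set set" where
  "add_cosets R S = {(\<lambda>y. x + y) ` S | x. x \<in> R}"

end

theory Submission
  imports Defs
begin

text \<open>If x \<in> R lies outside V, the cosets x ^ k + (V \<inter> R) are pairwise distinct:
x ^ (i + m + 1) - x ^ i \<in> V would give x = (x ^ (i + m + 1) - x ^ i) * x\<inverse> ^ (i + m) + x\<inverse> ^ m \<in> V,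
because x\<inverse> \<in> V.\<close>

lemma subring_of_power_closed: "subring_of S \<Longrightarrow> x \<in> S \<Longrightarrow> x ^ n \<in> S"
  by (induction n) (auto simp: subring_of_def)

lemma subring_of_diff_closed: "subring_of S \<Longrightarrow> x \<in> S \<Longrightarrow> y \<in> S \<Longrightarrow> x - y \<in> S"
  unfolding subring_of_def by (metis diff_conv_add_uminus)

lemma power_diff_notin_valuation_ring:
  fixes x :: "'a::field"
  assumes V: "valuation_ring V" and x: "x \<notin> V" and "i < j"
  shows "x ^ j - x ^ i \<notin> V"
proof
  assume diff: "x ^ j - x ^ i \<in> V"
  have SV: "subring_of V" using V by (simp add: valuation_ring_def)
  have "x \<noteq> 0" using x SV by (auto simp: subring_of_def)
  then have inv: "inverse x \<in> V" using V x by (auto simp: valuation_ring_def)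
  obtain m where j: "j = i + Suc m" using \<open>i < j\<close> by (metis less_iff_Suc_add add_Suc_right add.commute)
  have "x = (x ^ j - x ^ i) * inverse x ^ (i + m) + inverse x ^ m"
    using \<open>x \<noteq> 0\<close> by (simp add: j power_add field_simps power_inverse)
  also have "\<dots> \<in> V"
    using diff SV subring_of_power_closed[OF SV inv] by (simp add: subring_of_def)
  finally show False using x by contradiction
qed

lemma add_coset_eq_imp_diff_mem:
  fixes a b :: "'a::ab_group_add"
  assumes "0 \<in> S" and "(\<lambda>y. a + y) ` S = (\<lambda>y. b + y) ` S"
  shows "b - a \<in> S"
proof -
  have "b \<in> (\<lambda>y. b + y) ` S" using assms(1) by (rule rev_image_eqI) simp
  then obtain y where "y \<in> S" "b = a + y" using assms(2) by auto
  then show ?thesis by simp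
qed

lemma add_cosets_self:
  assumes "subring_of R"
  shows "add_cosets R R = {R}"
proof -
  have "(\<lambda>y. x + y) ` R = R" if x: "x \<in> R" for x
  proof
    show "(\<lambda>y. x + y) ` R \<subseteq> R" using x assms by (auto simp: subring_of_def)
    show "R \<subseteq> (\<lambda>y. x + y) ` R"
    proof
      fix z assume "z \<in> R"
      then have "z - x \<in> R" using subring_of_diff_closed[OF assms] x by blast
      then show "z \<in> (\<lambda>y. x + y) ` R" by (metis add.commute diff_add_cancel image_eqI)
    qed
  qed
  moreover have "0 \<in> R" using assms by (simp add: subring_of_def)
  ultimately show ?thesis unfolding add_cosets_def by auto
qed

lemma infinite_add_cosets_valuation_ring:
  assumes R: "subring_of R" and V: "valuation_ring V"
    and x: "x \<in> R" "x \<notin> V"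
  shows "infinite (add_cosets R (V \<inter> R))"
proof
  assume fin: "finite (add_cosets R (V \<inter> R))"
  define coset where "coset k = (\<lambda>y. x ^ k + y) ` (V \<inter> R)" for k :: nat
  have "range coset \<subseteq> add_cosets R (V \<inter> R)"
    unfolding coset_def add_cosets_def using subring_of_power_closed[OF R x(1)] by blast
  then have "finite (range coset)" using fin by (rule finite_subset)
  then have "\<not> inj coset" using finite_imageD by blast
  then obtain i j where "i < j" and eq: "coset i = coset j"
    unfolding inj_def by (metis linorder_neqE_nat)
  have "0 \<in> V \<inter> R"
    using V R by (simp add: valuation_ring_def subring_of_def)
  then have "x ^ j - x ^ i \<in> V \<inter> R"
    using eq unfolding coset_def by (rule add_coset_eq_imp_diff_mem)
  then show False using power_diff_notin_valuation_ring[OF V x(2) \<open>i < j\<close>] by blast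
qed

theorem mainTheorem16:
  fixes R V :: "'a::field set"
  assumes "subring_of R"
    and "is_frac_field_of R"
    and "local_ring R"
    and "valuation_ring V"
  shows "finite (add_cosets R (V \<inter> R)) \<longleftrightarrow> R \<subseteq> V"
proof
  assume "finite (add_cosets R (V \<inter> R))"
  then show "R \<subseteq> V"
    using infinite_add_cosets_valuation_ring[OF assms(1,4)] by blast
next
  assume "R \<subseteq> V"
  then have "V \<inter> R = R" by blast
  then show "finite (add_cosets R (V \<inter> R))" using add_cosets_self[OF assms(1)] by simp
qed

end
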